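(* Let $M,N\ge 0$ and let $u\le w$ be elements of the poset of shuffles $W_{MN}$. Then the interval $[u,w]=\{v\in W_{MN}: u\le v\le w\}$ is isomorphic (as a poset) to a product $W_{M_1N_1}\times W_{M_2N_2}\times\cdots\times W_{M_kN_k}$ of posets of shuffles, for suitable $k\ge 1$ and $M_p,N_p\ge 0$.
   Context: Let $\mathcal{A}=\{a_1,\dots,a_M\}$ (lower alphabet) and $\mathcal{X}=\{x_1,\dots,x_N\}$ (upper alphabet) be disjoint finite sets. A shuffle word is a word (possibly empty) with distinct letters from $\mathcal{A}\cup\mathcal{X}$ such that the letters from $\mathcal{A}$ occurring in it appear in increasing order of subscripts, and likewise for the letters from $\mathcal{X}$. The poset of shuffles $W_{MN}$ is the set of all shuffle words over $\mathcal{A},\mathcal{X}$, partially ordered as the reflexive-transitive closure of the covering relation: $w$ is covered by $w'$ iff $w'$ is obtained from $w$ either by deleting a letter belonging to $\mathcal{A}$ or by inserting a letter belonging to $\mathcal{X}$ (in a position such that the result is a shuffle word). Its minimum is $a_1a_2\cdots a_M$ and its maximum is $x_1x_2\cdots x_N$. *)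

theory Defs
  imports Main
begin

text \<open>Letters: A i is the lower letter a_i, X j is the upper letter x_j (subscripts start at 1).\<close>
datatype letter = A nat | X nat

fun is_A :: "letter \<Rightarrow> bool" where
  "is_A (A i) = True" | "is_A (X j) = False"

fun idx :: "letter \<Rightarrow> nat" where
  "idx (A i) = i" | "idx (X j) = j"

definition shuffle_word :: "nat \<Rightarrow> nat \<Rightarrow> letter list \<Rightarrow> bool" where
  "shuffle_word M N w \<longleftrightarrow>
     distinct w \<and>
     set w \<subseteq> {A i | i. 1 \<le> i \<and> i \<le> M} \<union> {X j | j. 1 \<le> j \<and> j \<le> N} \<and>
     sorted_wrt (<) (map idx (filter is_A w)) \<and>
     sorted_wrt (<) (map idx (filter (\<lambda>l. \<not> is_A l) w))"

definition shuffles :: "nat \<Rightarrow> nat \<Rightarrow> letter list set" where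
  "shuffles M N = {w. shuffle_word M N w}"

definition shuffle_cover :: "nat \<Rightarrow> nat \<Rightarrow> letter list \<Rightarrow> letter list \<Rightarrow> bool" where
  "shuffle_cover M N w w' \<longleftrightarrow>
     w \<in> shuffles M N \<and> w' \<in> shuffles M N \<and>
     ((\<exists>i xs ys. w = xs @ A i # ys \<and> w' = xs @ ys) \<or>
      (\<exists>j xs ys. w = xs @ ys \<and> w' = xs @ X j # ys))"

definition shuffle_le :: "nat \<Rightarrow> nat \<Rightarrow> letter list \<Rightarrow> letter list \<Rightarrow> bool" where
  "shuffle_le M N u v \<longleftrightarrow> u \<in> shuffles M N \<and> v \<in> shuffles M N \<and> (shuffle_cover M N)\<^sup>*\<^sup>* u v"

definition shuffle_interval :: "nat \<Rightarrow> nat \<Rightarrow> letter list \<Rightarrow> letter list \<Rightarrow> letter list set" where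
  "shuffle_interval M N u w = {v \<in> shuffles M N. shuffle_le M N u v \<and> shuffle_le M N v w}"

definition prod_shuffles :: "(nat \<times> nat) list \<Rightarrow> letter list list set" where
  "prod_shuffles ds = {ws. length ws = length ds \<and>
      (\<forall>p < length ds. ws ! p \<in> shuffles (fst (ds ! p)) (snd (ds ! p)))}"

definition prod_le :: "(nat \<times> nat) list \<Rightarrow> letter list list \<Rightarrow> letter list list \<Rightarrow> bool" where
  "prod_le ds ws ws' \<longleftrightarrow> ws \<in> prod_shuffles ds \<and> ws' \<in> prod_shuffles ds \<and>
      (\<forall>p < length ds. shuffle_le (fst (ds ! p)) (snd (ds ! p)) (ws ! p) (ws' ! p))"

end

theory Submission
  imports Defs
begin

(* Deleting lower letters and inserting upper letters shows that u <= v holds iff every lower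
   letter of v occurs in u, every upper letter of u occurs in v, and the letters common to u and v
   occur in both in the same order (word_le).  If u and w share no letter, then u consists of
   lower and w of upper letters, and [u, w] is the set of all shuffle words over the letters of
   u and w: a relabelled copy of W_{|u| |w|}.  Otherwise let c be the first letter of u occurring
   in w and write u = u1 c u2, w = w1 c w2.  Every v in [u, w] contains c and splits as v1 c v2
   with v1 in [u1, w1] and v2 in [u2, w2]; this gives [u, w] = [u1, w1] x [u2, w2], and induction
   on the length of u finishes the proof. *)

definition may_precede :: "letter \<Rightarrow> letter \<Rightarrow> bool" where
  "may_precede a b \<longleftrightarrow> (is_A a \<longleftrightarrow> is_A b) \<longrightarrow> idx a < idx b"

definition ordered_word :: "letter list \<Rightarrow> bool" where
  "ordered_word v \<longleftrightarrow> distinct v \<and> sorted_wrt may_precede v"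

definition alphabet :: "nat \<Rightarrow> nat \<Rightarrow> letter set" where
  "alphabet M N = {A i | i. 1 \<le> i \<and> i \<le> M} \<union> {X j | j. 1 \<le> j \<and> j \<le> N}"

definition ordered_words :: "letter set \<Rightarrow> letter list set" where
  "ordered_words L = {v. ordered_word v \<and> set v \<subseteq> L}"

lemma sorted_may_precede_iff:
  "sorted_wrt may_precede v \<longleftrightarrow>
     sorted_wrt (<) (map idx (filter is_A v)) \<and> sorted_wrt (<) (map idx (filter (\<lambda>l. \<not> is_A l) v))"
  by (induction v) (auto simp: may_precede_def)

lemma shuffle_word_iff: "shuffle_word M N v \<longleftrightarrow> ordered_word v \<and> set v \<subseteq> alphabet M N"
  unfolding shuffle_word_def ordered_word_def alphabet_def sorted_may_precede_iff by auto

lemma shuffles_eq_ordered_words: "shuffles M N = ordered_words (alphabet M N)"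
  unfolding shuffles_def ordered_words_def shuffle_word_iff by simp

lemma shuffle_word_remove: "shuffle_word M N (xs @ a # ys) \<Longrightarrow> shuffle_word M N (xs @ ys)"
  unfolding shuffle_word_iff ordered_word_def by (auto simp: sorted_wrt_append)

lemma shuffle_cover_delete:
  "shuffle_word M N (xs @ A i # ys) \<Longrightarrow> shuffle_cover M N (xs @ A i # ys) (xs @ ys)"
  unfolding shuffle_cover_def shuffles_def using shuffle_word_remove by blast

lemma shuffle_cover_insert:
  "shuffle_word M N (xs @ X j # ys) \<Longrightarrow> shuffle_cover M N (xs @ ys) (xs @ X j # ys)"
  unfolding shuffle_cover_def shuffles_def using shuffle_word_remove by blast

section \<open>The order on shuffle words\<close>

definition word_le :: "letter list \<Rightarrow> letter list \<Rightarrow> bool" where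
  "word_le u v \<longleftrightarrow> (\<forall>l\<in>set v. is_A l \<longrightarrow> l \<in> set u) \<and> (\<forall>l\<in>set u. \<not> is_A l \<longrightarrow> l \<in> set v) \<and>
     filter (\<lambda>l. l \<in> set v) u = filter (\<lambda>l. l \<in> set u) v"

lemma word_le_refl: "word_le u u"
  unfolding word_le_def by (simp add: filter_id_conv)

lemma word_le_delete:
  assumes "word_le u (xs @ A i # ys)" and "distinct (xs @ A i # ys)"
  shows "word_le u (xs @ ys)"
proof -
  have "filter (\<lambda>l. l \<in> set (xs @ ys)) u =
      filter (\<lambda>l. l \<noteq> A i) (filter (\<lambda>l. l \<in> set (xs @ A i # ys)) u)"
    using assms(2) by (auto intro: filter_cong)
  also have "\<dots> = filter (\<lambda>l. l \<noteq> A i) (filter (\<lambda>l. l \<in> set u) (xs @ A i # ys))"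
    using assms(1) unfolding word_le_def by simp
  also have "\<dots> = filter (\<lambda>l. l \<in> set u) (filter (\<lambda>l. l \<noteq> A i) (xs @ A i # ys))"
    by (simp add: filter_filter conj_commute)
  also have "filter (\<lambda>l. l \<noteq> A i) (xs @ A i # ys) = xs @ ys"
    using assms(2) by (auto simp: filter_id_conv intro!: arg_cong2[where f="(@)"])
  finally show ?thesis
    using assms unfolding word_le_def by auto
qed

lemma word_le_insert:
  assumes "word_le u (xs @ ys)" and "distinct (xs @ X j # ys)"
  shows "word_le u (xs @ X j # ys)"
proof -
  have "X j \<notin> set u"
    using assms unfolding word_le_def by auto
  then have "filter (\<lambda>l. l \<in> set (xs @ X j # ys)) u = filter (\<lambda>l. l \<in> set (xs @ ys)) u"
    by (auto intro: filter_cong)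
  with \<open>X j \<notin> set u\<close> show ?thesis
    using assms unfolding word_le_def by auto
qed

lemma rtranclp_shuffle_cover_imp_word_le:
  "(shuffle_cover M N)\<^sup>*\<^sup>* u w \<Longrightarrow> word_le u w"
proof (induction rule: rtranclp_induct)
  case base
  show ?case by (rule word_le_refl)
next
  case (step v w)
  then have "distinct v" "distinct w"
    unfolding shuffle_cover_def shuffles_def shuffle_word_def by auto
  with step show ?case
    unfolding shuffle_cover_def using word_le_delete word_le_insert by blast
qed

lemma rtranclp_shuffle_cover_delete:
  "shuffle_word M N (xs @ v) \<Longrightarrow> \<forall>l\<in>set v. \<not> P l \<longrightarrow> is_A l \<Longrightarrow>
     (shuffle_cover M N)\<^sup>*\<^sup>* (xs @ v) (xs @ filter P v)"
proof (induction v arbitrary: xs)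
  case (Cons a v)
  show ?case
  proof (cases "P a")
    case True
    then show ?thesis using Cons.IH[of "xs @ [a]"] Cons.prems by simp
  next
    case False
    then obtain i where "a = A i" using Cons.prems by (cases a) auto
    then have "shuffle_cover M N (xs @ a # v) (xs @ v)"
      using Cons.prems shuffle_cover_delete by blast
    moreover have "(shuffle_cover M N)\<^sup>*\<^sup>* (xs @ v) (xs @ filter P v)"
      using Cons shuffle_word_remove by simp
    ultimately show ?thesis using False by simp
  qed
qed simp

lemma rtranclp_shuffle_cover_insert:
  "shuffle_word M N (xs @ v) \<Longrightarrow> \<forall>l\<in>set v. \<not> P l \<longrightarrow> \<not> is_A l \<Longrightarrow>
     (shuffle_cover M N)\<^sup>*\<^sup>* (xs @ filter P v) (xs @ v)"
proof (induction v arbitrary: xs)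
  case (Cons a v)
  show ?case
  proof (cases "P a")
    case True
    then show ?thesis using Cons.IH[of "xs @ [a]"] Cons.prems by simp
  next
    case False
    then obtain j where "a = X j" using Cons.prems by (cases a) auto
    then have "shuffle_cover M N (xs @ v) (xs @ a # v)"
      using Cons.prems shuffle_cover_insert by blast
    moreover have "(shuffle_cover M N)\<^sup>*\<^sup>* (xs @ filter P v) (xs @ v)"
      using Cons shuffle_word_remove by simp
    ultimately show ?thesis using False by simp
  qed
qed simp

lemma shuffle_le_iff_word_le:
  "shuffle_le M N u w \<longleftrightarrow> shuffle_word M N u \<and> shuffle_word M N w \<and> word_le u w"
proof
  assume "shuffle_le M N u w"
  then show "shuffle_word M N u \<and> shuffle_word M N w \<and> word_le u w"
    using rtranclp_shuffle_cover_imp_word_le unfolding shuffle_le_def shuffles_def by auto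
next
  assume "shuffle_word M N u \<and> shuffle_word M N w \<and> word_le u w"
  then have u: "shuffle_word M N u" and w: "shuffle_word M N w"
    and deleted: "\<forall>l\<in>set u. l \<notin> set w \<longrightarrow> is_A l"
    and inserted: "\<forall>l\<in>set w. l \<notin> set u \<longrightarrow> \<not> is_A l"
    and common: "filter (\<lambda>l. l \<in> set w) u = filter (\<lambda>l. l \<in> set u) w"
    unfolding word_le_def by blast+
  have "(shuffle_cover M N)\<^sup>*\<^sup>* u (filter (\<lambda>l. l \<in> set w) u)"
    using rtranclp_shuffle_cover_delete[of M N "[]"] u deleted by simp
  also note common
  also have "(shuffle_cover M N)\<^sup>*\<^sup>* (filter (\<lambda>l. l \<in> set u) w) w"
    using rtranclp_shuffle_cover_insert[of M N "[]"] w inserted by simp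
  finally show "shuffle_le M N u w"
    using u w unfolding shuffle_le_def shuffles_def by simp
qed

definition word_interval :: "letter list \<Rightarrow> letter list \<Rightarrow> letter list set" where
  "word_interval u w = {v. ordered_word v \<and> word_le u v \<and> word_le v w}"

lemma word_interval_subset: "v \<in> word_interval u w \<Longrightarrow> set v \<subseteq> set u \<union> set w"
  unfolding word_interval_def word_le_def by blast

lemma shuffle_interval_eq_word_interval:
  assumes "shuffle_le M N u w"
  shows "shuffle_interval M N u w = word_interval u w"
proof -
  have "set u \<subseteq> alphabet M N" "set w \<subseteq> alphabet M N"
    using assms by (simp_all add: shuffle_le_iff_word_le shuffle_word_iff)
  then have "shuffle_word M N v" if "v \<in> word_interval u w" for v
    using that word_interval_subset[OF that] unfolding word_interval_def shuffle_word_iff by blast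
  then show ?thesis
    using assms unfolding shuffle_interval_def word_interval_def shuffles_def
    by (auto simp: shuffle_le_iff_word_le shuffle_word_iff)
qed

definition order_iso_betw ::
    "('a \<Rightarrow> 'a \<Rightarrow> bool) \<Rightarrow> ('b \<Rightarrow> 'b \<Rightarrow> bool) \<Rightarrow> ('a \<Rightarrow> 'b) \<Rightarrow> 'a set \<Rightarrow> 'b set \<Rightarrow> bool" where
  "order_iso_betw le le' f S T \<longleftrightarrow> bij_betw f S T \<and> (\<forall>x\<in>S. \<forall>y\<in>S. le x y \<longleftrightarrow> le' (f x) (f y))"

lemma order_iso_betw_comp:
  assumes f: "order_iso_betw le le' f S T" and g: "order_iso_betw le' le'' g T U"
  shows "order_iso_betw le le'' (g \<circ> f) S U"
proof -
  have "bij_betw (g \<circ> f) S U"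
    using f g bij_betw_trans unfolding order_iso_betw_def by blast
  moreover have "f x \<in> T" if "x \<in> S" for x
    using f that bij_betw_apply unfolding order_iso_betw_def by metis
  ultimately show ?thesis
    using f g unfolding order_iso_betw_def by simp
qed

lemma order_iso_betw_inv_into:
  assumes f: "order_iso_betw le le' f S T"
  shows "order_iso_betw le' le (inv_into S f) T S"
proof -
  have bij: "bij_betw f S T" and iso: "\<forall>x\<in>S. \<forall>y\<in>S. le x y \<longleftrightarrow> le' (f x) (f y)"
    using f unfolding order_iso_betw_def by auto
  have inv: "bij_betw (inv_into S f) T S"
    by (rule bij_betw_inv_into[OF bij])
  have "le' x y \<longleftrightarrow> le (inv_into S f x) (inv_into S f y)" if "x \<in> T" "y \<in> T" for x y
    using iso bij_betw_apply[OF inv] bij_betw_inv_into_right[OF bij] that by metis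
  with inv show ?thesis
    unfolding order_iso_betw_def by blast
qed

lemma order_iso_betw_map_prod:
  "order_iso_betw le1 le1' f S S' \<Longrightarrow> order_iso_betw le2 le2' g T T' \<Longrightarrow>
     order_iso_betw (rel_prod le1 le2) (rel_prod le1' le2') (map_prod f g) (S \<times> T) (S' \<times> T')"
  unfolding order_iso_betw_def by (auto intro: bij_betw_map_prod)

lemma order_iso_betw_cong:
  assumes "order_iso_betw le1 le2 f S T"
    and "\<And>x y. x \<in> S \<Longrightarrow> y \<in> S \<Longrightarrow> le1 x y \<longleftrightarrow> le1' x y"
    and "\<And>x y. x \<in> T \<Longrightarrow> y \<in> T \<Longrightarrow> le2 x y \<longleftrightarrow> le2' x y"
  shows "order_iso_betw le1' le2' f S T"
  using assms unfolding order_iso_betw_def bij_betw_def by auto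

lemma Cons_mem_prod_shuffles:
  "x # xs \<in> prod_shuffles ((M, N) # ds) \<longleftrightarrow> x \<in> shuffles M N \<and> xs \<in> prod_shuffles ds"
  unfolding prod_shuffles_def by (auto simp: less_Suc_eq_0_disj)

lemma prod_shuffles_Cons:
  "prod_shuffles ((M, N) # ds) = (\<lambda>(x, xs). x # xs) ` (shuffles M N \<times> prod_shuffles ds)"
proof (intro set_eqI iffI)
  fix ws
  assume ws: "ws \<in> prod_shuffles ((M, N) # ds)"
  then obtain x xs where "ws = x # xs"
    unfolding prod_shuffles_def by (cases ws) auto
  with ws show "ws \<in> (\<lambda>(x, xs). x # xs) ` (shuffles M N \<times> prod_shuffles ds)"
    by (auto simp: Cons_mem_prod_shuffles intro!: image_eqI[where x="(x, xs)"])
qed (auto simp: Cons_mem_prod_shuffles)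

lemma prod_le_Cons:
  "prod_le ((M, N) # ds) (x # xs) (y # ys) \<longleftrightarrow>
     x # xs \<in> prod_shuffles ((M, N) # ds) \<and> y # ys \<in> prod_shuffles ((M, N) # ds) \<and>
     shuffle_le M N x y \<and> prod_le ds xs ys"
  unfolding prod_le_def Cons_mem_prod_shuffles by (auto simp: less_Suc_eq_0_disj)

lemma order_iso_betw_Cons:
  "order_iso_betw (rel_prod (shuffle_le M N) (prod_le ds)) (prod_le ((M, N) # ds))
     (\<lambda>(x, xs). x # xs) (shuffles M N \<times> prod_shuffles ds) (prod_shuffles ((M, N) # ds))"
  unfolding order_iso_betw_def bij_betw_def prod_shuffles_Cons
  by (auto simp: inj_on_def prod_le_Cons Cons_mem_prod_shuffles)

lemma order_iso_betw_singleton: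
  "order_iso_betw (shuffle_le M N) (prod_le [(M, N)]) (\<lambda>x. [x])
     (shuffles M N) (prod_shuffles [(M, N)])"
proof -
  have Nil: "prod_shuffles [] = {[]}" "prod_le [] [] []"
    unfolding prod_shuffles_def prod_le_def by auto
  then have "prod_shuffles [(M, N)] = (\<lambda>x. [x]) ` shuffles M N"
    unfolding prod_shuffles_Cons by auto
  moreover have "prod_le [(M, N)] [x] [y] \<longleftrightarrow> shuffle_le M N x y" for x y
    by (auto simp: prod_le_Cons Cons_mem_prod_shuffles Nil shuffle_le_def)
  ultimately show ?thesis
    unfolding order_iso_betw_def bij_betw_def inj_on_def by simp
qed

section \<open>Intervals between a lower and an upper word\<close>

lemma sorted_wrt_cong:
  "(\<And>x y. x \<in> set xs \<Longrightarrow> y \<in> set xs \<Longrightarrow> P x y \<longleftrightarrow> Q x y) \<Longrightarrow> sorted_wrt P xs \<longleftrightarrow> sorted_wrt Q xs"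
  by (induction xs) auto

definition relabelling_on :: "(letter \<Rightarrow> letter) \<Rightarrow> letter set \<Rightarrow> bool" where
  "relabelling_on \<psi> L \<longleftrightarrow> inj_on \<psi> L \<and> (\<forall>l\<in>L. is_A (\<psi> l) = is_A l) \<and>
     (\<forall>l\<in>L. \<forall>l'\<in>L. may_precede (\<psi> l) (\<psi> l') \<longleftrightarrow> may_precede l l')"

lemma relabelling_on_subset: "relabelling_on \<psi> L \<Longrightarrow> L' \<subseteq> L \<Longrightarrow> relabelling_on \<psi> L'"
  unfolding relabelling_on_def by (auto intro: inj_on_subset)

lemma ordered_word_map:
  assumes "relabelling_on \<psi> (set x)"
  shows "ordered_word (map \<psi> x) \<longleftrightarrow> ordered_word x"
proof -
  have "sorted_wrt may_precede (map \<psi> x) \<longleftrightarrow> sorted_wrt (\<lambda>l l'. may_precede (\<psi> l) (\<psi> l')) x"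
    by (rule sorted_wrt_map)
  also have "\<dots> \<longleftrightarrow> sorted_wrt may_precede x"
    using assms unfolding relabelling_on_def by (intro sorted_wrt_cong) auto
  finally show ?thesis
    using assms unfolding ordered_word_def relabelling_on_def by (simp add: distinct_map)
qed

lemma filter_mem_map:
  assumes "inj_on \<psi> (set x \<union> set y)"
  shows "filter (\<lambda>l. l \<in> set (map \<psi> y)) (map \<psi> x) = map \<psi> (filter (\<lambda>l. l \<in> set y) x)"
proof -
  have "filter (\<lambda>l. \<psi> l \<in> \<psi> ` set y) x = filter (\<lambda>l. l \<in> set y) x"
    using assms by (intro filter_cong) (auto simp: inj_on_def)
  then show ?thesis
    by (simp add: filter_map comp_def)
qed

lemma word_le_map:
  assumes "relabelling_on \<psi> (set x \<union> set y)"
  shows "word_le (map \<psi> x) (map \<psi> y) \<longleftrightarrow> word_le x y"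
proof -
  have inj: "inj_on \<psi> (set x \<union> set y)" and kind: "\<forall>l\<in>set x \<union> set y. is_A (\<psi> l) = is_A l"
    using assms unfolding relabelling_on_def by auto
  have lower: "(\<forall>l\<in>set (map \<psi> y). is_A l \<longrightarrow> l \<in> set (map \<psi> x)) \<longleftrightarrow> (\<forall>l\<in>set y. is_A l \<longrightarrow> l \<in> set x)"
    using kind by (simp add: inj_on_image_mem_iff[OF inj])
  have upper: "(\<forall>l\<in>set (map \<psi> x). \<not> is_A l \<longrightarrow> l \<in> set (map \<psi> y)) \<longleftrightarrow> (\<forall>l\<in>set x. \<not> is_A l \<longrightarrow> l \<in> set y)"
    using kind by (simp add: inj_on_image_mem_iff[OF inj])
  have "inj_on \<psi> (set (filter (\<lambda>l. l \<in> set y) x) \<union> set (filter (\<lambda>l. l \<in> set x) y))"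
    using inj by (rule inj_on_subset) auto
  then have "map \<psi> (filter (\<lambda>l. l \<in> set y) x) = map \<psi> (filter (\<lambda>l. l \<in> set x) y) \<longleftrightarrow>
      filter (\<lambda>l. l \<in> set y) x = filter (\<lambda>l. l \<in> set x) y"
    by (rule inj_on_map_eq_map)
  moreover have "filter (\<lambda>l. l \<in> set (map \<psi> x)) (map \<psi> y) = map \<psi> (filter (\<lambda>l. l \<in> set x) y)"
    using inj by (intro filter_mem_map) (simp add: Un_commute)
  ultimately show ?thesis
    unfolding word_le_def lower upper filter_mem_map[OF inj] by simp
qed

lemma order_iso_betw_map:
  assumes "relabelling_on \<psi> L"
  shows "order_iso_betw word_le word_le (map \<psi>) (ordered_words L) (ordered_words (\<psi> ` L))"
proof -
  have inj: "inj_on (map \<psi>) (ordered_words L)"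
  proof (rule inj_onI)
    fix x y
    assume "x \<in> ordered_words L" "y \<in> ordered_words L" "map \<psi> x = map \<psi> y"
    moreover have "inj_on \<psi> L"
      using assms unfolding relabelling_on_def by blast
    ultimately show "x = y"
      unfolding ordered_words_def by (auto dest: inj_on_map_eq_map[THEN iffD1, OF inj_on_subset])
  qed
  have "ordered_words (\<psi> ` L) \<subseteq> map \<psi> ` ordered_words L"
  proof
    fix v
    assume v: "v \<in> ordered_words (\<psi> ` L)"
    define x where "x = map (inv_into L \<psi>) v"
    have "set x \<subseteq> L"
      using v unfolding x_def ordered_words_def by (auto intro: inv_into_into)
    moreover have "map \<psi> x = v"
      using v unfolding x_def ordered_words_def by (auto simp: f_inv_into_f intro!: map_idI)
    moreover have "ordered_word x"
      using ordered_word_map[OF relabelling_on_subset[OF assms \<open>set x \<subseteq> L\<close>]] v \<open>map \<psi> x = v\<close>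
      unfolding ordered_words_def by simp
    ultimately show "v \<in> map \<psi> ` ordered_words L"
      unfolding ordered_words_def by blast
  qed
  moreover have "map \<psi> ` ordered_words L \<subseteq> ordered_words (\<psi> ` L)"
    using ordered_word_map relabelling_on_subset[OF assms] unfolding ordered_words_def
    by (auto 4 3)
  moreover have "word_le x y \<longleftrightarrow> word_le (map \<psi> x) (map \<psi> y)"
    if "x \<in> ordered_words L" and "y \<in> ordered_words L" for x y
    using word_le_map relabelling_on_subset[OF assms] that unfolding ordered_words_def by auto
  ultimately show ?thesis
    unfolding order_iso_betw_def bij_betw_def using inj by blast
qed

lemma strict_sorted_nth_less_iff:
  fixes xs :: "'a::linorder list"
  assumes "sorted_wrt (<) xs" and "i < length xs" and "j < length xs"
  shows "xs ! i < xs ! j \<longleftrightarrow> i < j"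
  using assms sorted_wrt_nth_less by (metis linorder_neqE_nat order.asym)

lemma sorted_may_precede_single_kind:
  assumes "\<forall>l\<in>set xs. is_A l = b"
  shows "sorted_wrt may_precede xs \<longleftrightarrow> sorted_wrt (<) (map idx xs)"
  unfolding sorted_wrt_map using assms by (intro sorted_wrt_cong) (auto simp: may_precede_def)

lemma inj_on_idx_single_kind:
  assumes "\<forall>l\<in>L. is_A l = b"
  shows "inj_on idx L"
proof (rule inj_onI)
  fix l l'
  assume "l \<in> L" "l' \<in> L" "idx l = idx l'"
  then have "is_A l = is_A l'"
    using assms by simp
  with \<open>idx l = idx l'\<close> show "l = l'"
    by (cases l; cases l') auto
qed

lemma single_kind_sorted_eq:
  assumes kind: "\<forall>l\<in>set xs \<union> set ys. is_A l = b"
    and "sorted_wrt may_precede xs" and "sorted_wrt may_precede ys" and "set xs = set ys"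
  shows "xs = ys"
proof -
  have "sorted_wrt (<) (map idx xs)" "sorted_wrt (<) (map idx ys)"
    using assms sorted_may_precede_single_kind[of xs b] sorted_may_precede_single_kind[of ys b]
    by auto
  then have "map idx xs = map idx ys"
    using \<open>set xs = set ys\<close> by (intro strict_sorted_equal) simp_all
  then show ?thesis
    using inj_on_idx_single_kind[OF kind] by (simp add: inj_on_map_eq_map)
qed

lemma idx_nth_less_iff:
  assumes "ordered_word u" and "\<forall>l\<in>set u. is_A l = b" and "i < length u" and "j < length u"
  shows "idx (u ! i) < idx (u ! j) \<longleftrightarrow> i < j"
  using assms strict_sorted_nth_less_iff[of "map idx u" i j] sorted_may_precede_single_kind[of u b]
  by (simp add: ordered_word_def)

lemma word_interval_lower_upper:
  assumes lower: "\<forall>l\<in>set u. is_A l" and upper: "\<forall>l\<in>set w. \<not> is_A l"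
    and u: "ordered_word u" and w: "ordered_word w"
  shows "word_interval u w = ordered_words (set u \<union> set w)"
proof (intro set_eqI iffI)
  fix v
  assume "v \<in> word_interval u w"
  then show "v \<in> ordered_words (set u \<union> set w)"
    using word_interval_subset unfolding word_interval_def ordered_words_def by blast
next
  fix v
  assume "v \<in> ordered_words (set u \<union> set w)"
  then have v: "ordered_word v" and sub: "set v \<subseteq> set u \<union> set w"
    unfolding ordered_words_def by auto
  have sorted: "sorted_wrt may_precede (filter P x)" if "ordered_word x" for x P
    using that by (simp add: ordered_word_def sorted_wrt_filter)
  have "filter (\<lambda>l. l \<in> set v) u = filter (\<lambda>l. l \<in> set u) v"
    using lower sub by (intro single_kind_sorted_eq[where b = True] sorted u v) auto
  moreover have "filter (\<lambda>l. l \<in> set w) v = filter (\<lambda>l. l \<in> set v) w"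
    using upper sub by (intro single_kind_sorted_eq[where b = False] sorted v w) auto
  ultimately show "v \<in> word_interval u w"
    using v sub lower upper unfolding word_interval_def word_le_def by auto
qed

definition nth_letter :: "letter list \<Rightarrow> letter list \<Rightarrow> letter \<Rightarrow> letter" where
  "nth_letter u w l = (case l of A i \<Rightarrow> u ! (i - 1) | X j \<Rightarrow> w ! (j - 1))"

lemma nth_letter_image: "nth_letter u w ` alphabet (length u) (length w) = set u \<union> set w"
proof
  show "nth_letter u w ` alphabet (length u) (length w) \<subseteq> set u \<union> set w"
    unfolding alphabet_def nth_letter_def by auto
  have "u ! k = nth_letter u w (A (Suc k))" "w ! k' = nth_letter u w (X (Suc k'))" for k k'
    unfolding nth_letter_def by simp_all
  then show "set u \<union> set w \<subseteq> nth_letter u w ` alphabet (length u) (length w)"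
    unfolding alphabet_def by (auto simp: in_set_conv_nth)
qed

lemma relabelling_on_nth_letter:
  assumes lower: "\<forall>l\<in>set u. is_A l" and upper: "\<forall>l\<in>set w. \<not> is_A l"
    and u: "ordered_word u" and w: "ordered_word w"
  shows "relabelling_on (nth_letter u w) (alphabet (length u) (length w))"
  unfolding relabelling_on_def
proof (intro conjI ballI)
  let ?L = "alphabet (length u) (length w)"
  show kind: "is_A (nth_letter u w l) = is_A l" if "l \<in> ?L" for l
    using that lower upper unfolding alphabet_def nth_letter_def by auto
  show "inj_on (nth_letter u w) ?L"
  proof (rule inj_onI)
    fix l l'
    assume l: "l \<in> ?L" and l': "l' \<in> ?L" and eq: "nth_letter u w l = nth_letter u w l'"
    then have "is_A l = is_A l'"
      using kind by metis
    with l l' eq u w show "l = l'"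
      unfolding alphabet_def nth_letter_def ordered_word_def by (auto simp: nth_eq_iff_index_eq)
  qed
  show "may_precede (nth_letter u w l) (nth_letter u w l') \<longleftrightarrow> may_precede l l'"
    if l: "l \<in> ?L" and l': "l' \<in> ?L" for l l'
  proof (cases "is_A l = is_A l'")
    case True
    with l l' show ?thesis
      unfolding alphabet_def nth_letter_def may_precede_def
      using idx_nth_less_iff[OF u, of True] idx_nth_less_iff[OF w, of False] lower upper
      by auto
  next
    case False
    then show ?thesis
      using kind l l' unfolding may_precede_def by auto
  qed
qed

lemma order_iso_betw_word_interval_shuffles:
  assumes "\<forall>l\<in>set u. is_A l" and "\<forall>l\<in>set w. \<not> is_A l"
    and "ordered_word u" and "ordered_word w"
  shows "\<exists>f. order_iso_betw word_le (shuffle_le (length u) (length w)) f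
      (word_interval u w) (shuffles (length u) (length w))"
proof -
  have "order_iso_betw word_le word_le (map (nth_letter u w))
      (shuffles (length u) (length w)) (word_interval u w)"
    using order_iso_betw_map[OF relabelling_on_nth_letter[OF assms]]
    unfolding nth_letter_image word_interval_lower_upper[OF assms] shuffles_eq_ordered_words .
  then have "order_iso_betw (shuffle_le (length u) (length w)) word_le (map (nth_letter u w))
      (shuffles (length u) (length w)) (word_interval u w)"
    by (rule order_iso_betw_cong) (auto simp: shuffle_le_iff_word_le shuffles_def)
  then show ?thesis
    using order_iso_betw_inv_into by blast
qed

section \<open>Splitting an interval at a common letter\<close>

lemma ordered_word_append_ConsD: "ordered_word (a @ c # b) \<Longrightarrow> ordered_word a \<and> ordered_word b"
  unfolding ordered_word_def by (simp add: sorted_wrt_append)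

lemma sorted_wrt_append_Cons_across:
  "sorted_wrt P (a @ c # b) \<Longrightarrow> x \<in> insert c (set a) \<Longrightarrow> y \<in> insert c (set b) \<Longrightarrow> x \<noteq> y \<Longrightarrow> P x y"
  by (auto simp: sorted_wrt_append)

lemma filter_append_Cons_eq:
  assumes "filter P (a @ c # b) = filter Q (a' @ c # b')"
    and "P c" and "Q c" and "distinct (a @ c # b)"
  shows "filter P a = filter Q a'" and "filter P b = filter Q b'"
  using assms append_Cons_eq_iff[of c "filter P a" "filter P b" "filter Q a'" "filter Q b'"]
  by auto

lemma word_le_append_Cons_common:
  assumes "word_le (a @ c # b) (a' @ c # b')"
    and "distinct (a @ c # b)"
  shows "set a \<inter> set (a' @ c # b') = set a' \<inter> set (a @ c # b)"
    and "set b \<inter> set (a' @ c # b') = set b' \<inter> set (a @ c # b)"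
proof -
  let ?U = "a @ c # b" and ?V = "a' @ c # b'"
  have "filter (\<lambda>l. l \<in> set ?V) ?U = filter (\<lambda>l. l \<in> set ?U) ?V"
    using assms(1) unfolding word_le_def by blast
  from filter_append_Cons_eq[OF this _ _ assms(2)]
  have "filter (\<lambda>l. l \<in> set ?V) a = filter (\<lambda>l. l \<in> set ?U) a'"
    and "filter (\<lambda>l. l \<in> set ?V) b = filter (\<lambda>l. l \<in> set ?U) b'"
    by simp_all
  then show "set a \<inter> set ?V = set a' \<inter> set ?U" and "set b \<inter> set ?V = set b' \<inter> set ?U"
    by (metis Int_commute inter_set_filter)+
qed

lemma word_le_append_Cons:
  assumes separated: "(set a \<union> set a') \<inter> (set b \<union> set b') = {}"
    and c: "c \<notin> set a \<union> set a' \<union> set b \<union> set b'"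
  shows "word_le (a @ c # b) (a' @ c # b') \<longleftrightarrow> word_le a a' \<and> word_le b b'"
proof -
  have filter_a: "filter (\<lambda>l. l \<in> set (a' @ c # b')) (a @ c # b) =
      filter (\<lambda>l. l \<in> set a') a @ c # filter (\<lambda>l. l \<in> set b') b"
    and filter_a': "filter (\<lambda>l. l \<in> set (a @ c # b)) (a' @ c # b') =
      filter (\<lambda>l. l \<in> set a) a' @ c # filter (\<lambda>l. l \<in> set b) b'"
    using separated c by (auto intro!: arg_cong2[where f="(@)"] filter_cong)
  have "filter (\<lambda>l. l \<in> set a') a @ c # filter (\<lambda>l. l \<in> set b') b =
      filter (\<lambda>l. l \<in> set a) a' @ c # filter (\<lambda>l. l \<in> set b) b' \<longleftrightarrow>
      filter (\<lambda>l. l \<in> set a') a = filter (\<lambda>l. l \<in> set a) a' \<and>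
      filter (\<lambda>l. l \<in> set b') b = filter (\<lambda>l. l \<in> set b) b'"
    using c by (intro append_Cons_eq_iff) auto
  moreover have "(\<forall>l\<in>set (a' @ c # b'). is_A l \<longrightarrow> l \<in> set (a @ c # b)) \<longleftrightarrow>
      (\<forall>l\<in>set a'. is_A l \<longrightarrow> l \<in> set a) \<and> (\<forall>l\<in>set b'. is_A l \<longrightarrow> l \<in> set b)"
    and "(\<forall>l\<in>set (a @ c # b). \<not> is_A l \<longrightarrow> l \<in> set (a' @ c # b')) \<longleftrightarrow>
      (\<forall>l\<in>set a. \<not> is_A l \<longrightarrow> l \<in> set a') \<and> (\<forall>l\<in>set b. \<not> is_A l \<longrightarrow> l \<in> set b')"
    using separated c by auto
  ultimately show ?thesis
    unfolding word_le_def filter_a filter_a' by blast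
qed

context
  fixes u1 u2 w1 w2 :: "letter list" and c :: letter
  assumes u: "ordered_word (u1 @ c # u2)" and w: "ordered_word (w1 @ c # w2)"
    and separated: "(set u1 \<union> set w1) \<inter> (set u2 \<union> set w2) = {}"
begin

lemma word_le_append_Cons_within:
  assumes "set x1 \<union> set y1 \<subseteq> set u1 \<union> set w1" and "set x2 \<union> set y2 \<subseteq> set u2 \<union> set w2"
  shows "word_le (x1 @ c # x2) (y1 @ c # y2) \<longleftrightarrow> word_le x1 y1 \<and> word_le x2 y2"
proof (rule word_le_append_Cons)
  show "(set x1 \<union> set y1) \<inter> (set x2 \<union> set y2) = {}"
    using assms separated by blast
  have "c \<notin> set u1 \<union> set w1 \<union> set u2 \<union> set w2"
    using u w unfolding ordered_word_def by auto
  then show "c \<notin> set x1 \<union> set y1 \<union> set x2 \<union> set y2"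
    using assms by blast
qed

lemma ordered_word_append_Cons_within:
  assumes v1: "v1 \<in> word_interval u1 w1" and v2: "v2 \<in> word_interval u2 w2"
  shows "ordered_word (v1 @ c # v2)"
proof -
  have sub1: "set v1 \<subseteq> set u1 \<union> set w1" and sub2: "set v2 \<subseteq> set u2 \<union> set w2"
    using v1 v2 by (auto dest: word_interval_subset)
  have lower: "l \<in> set u1 \<or> l \<in> set u2" if "l \<in> set v1 \<or> l \<in> set v2" "is_A l" for l
    using that v1 v2 unfolding word_interval_def word_le_def by blast
  have upper: "l \<in> set w1 \<or> l \<in> set w2" if "l \<in> set v1 \<or> l \<in> set v2" "\<not> is_A l" for l
    using that v1 v2 unfolding word_interval_def word_le_def by blast
  have across: "may_precede x y"
    if "x \<in> insert c (set v1)" "y \<in> insert c (set v2)" "x \<noteq> y" for x y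
  proof (cases "is_A x = is_A y")
    case True
    have "x \<in> insert c (set u1) \<and> y \<in> insert c (set u2) \<or>
        x \<in> insert c (set w1) \<and> y \<in> insert c (set w2)"
      using that True lower upper sub1 sub2 separated by blast
    then show ?thesis
      using u w that(3) sorted_wrt_append_Cons_across unfolding ordered_word_def by metis
  qed (simp add: may_precede_def)
  have "c \<notin> set u1 \<union> set w1 \<union> set u2 \<union> set w2"
    using u w unfolding ordered_word_def by auto
  then have "distinct (v1 @ c # v2)"
    using v1 v2 sub1 sub2 separated unfolding word_interval_def ordered_word_def by auto
  moreover have "sorted_wrt may_precede (v1 @ c # v2)"
    using v1 v2 across \<open>distinct (v1 @ c # v2)\<close>
    unfolding word_interval_def ordered_word_def by (auto simp: sorted_wrt_append)
  ultimately show ?thesis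
    unfolding ordered_word_def ..
qed

lemma append_Cons_mem_word_interval:
  assumes v1: "v1 \<in> word_interval u1 w1" and v2: "v2 \<in> word_interval u2 w2"
  shows "v1 @ c # v2 \<in> word_interval (u1 @ c # u2) (w1 @ c # w2)"
  using ordered_word_append_Cons_within[OF assms] word_le_append_Cons_within
    word_interval_subset[OF v1] word_interval_subset[OF v2] v1 v2
  unfolding word_interval_def by auto

lemma word_interval_append_Cons_cases:
  assumes v: "v \<in> word_interval (u1 @ c # u2) (w1 @ c # w2)"
  obtains v1 v2 where "v = v1 @ c # v2" "v1 \<in> word_interval u1 w1" "v2 \<in> word_interval u2 w2"
proof -
  let ?U = "u1 @ c # u2" and ?W = "w1 @ c # w2"
  have ordered: "ordered_word v" and le_U: "word_le ?U v" and le_W: "word_le v ?W"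
    using v unfolding word_interval_def by auto
  have "c \<in> set v"
    using le_U le_W unfolding word_le_def by (cases "is_A c") auto
  then obtain v1 v2 where v_eq: "v = v1 @ c # v2"
    by (meson split_list)
  have "distinct ?U" "distinct v"
    using u ordered unfolding ordered_word_def by auto
  then have "set u1 \<inter> set v = set v1 \<inter> set ?U" "set u2 \<inter> set v = set v2 \<inter> set ?U"
    and "set v1 \<inter> set ?W = set w1 \<inter> set v" "set v2 \<inter> set ?W = set w2 \<inter> set v"
    using word_le_append_Cons_common le_U le_W unfolding v_eq by blast+
  moreover have "set v \<subseteq> set ?U \<union> set ?W"
    using word_interval_subset[OF v] .
  moreover have "set v1 \<subseteq> set v" "set v2 \<subseteq> set v"
    unfolding v_eq by auto
  ultimately have sub1: "set v1 \<subseteq> set u1 \<union> set w1" and sub2: "set v2 \<subseteq> set u2 \<union> set w2"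
    by blast+
  have "word_le ?U v \<longleftrightarrow> word_le u1 v1 \<and> word_le u2 v2"
    and "word_le v ?W \<longleftrightarrow> word_le v1 w1 \<and> word_le v2 w2"
    unfolding v_eq using sub1 sub2 by (intro word_le_append_Cons_within; blast)+
  moreover have "ordered_word v1 \<and> ordered_word v2"
    using ordered unfolding v_eq by (rule ordered_word_append_ConsD)
  ultimately have "v1 \<in> word_interval u1 w1" "v2 \<in> word_interval u2 w2"
    using le_U le_W unfolding word_interval_def by simp_all
  with v_eq show ?thesis
    by (rule that)
qed

lemma order_iso_betw_append_Cons:
  "order_iso_betw (rel_prod word_le word_le) word_le (\<lambda>(v1, v2). v1 @ c # v2)
     (word_interval u1 w1 \<times> word_interval u2 w2) (word_interval (u1 @ c # u2) (w1 @ c # w2))"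
  unfolding order_iso_betw_def bij_betw_def
proof (intro conjI inj_onI ballI)
  let ?join = "\<lambda>(v1, v2). v1 @ c # v2"
  have c_notin: "c \<notin> set u1 \<union> set w1 \<union> set u2 \<union> set w2"
    using u w unfolding ordered_word_def by auto
  fix p q
  assume p: "p \<in> word_interval u1 w1 \<times> word_interval u2 w2"
    and q: "q \<in> word_interval u1 w1 \<times> word_interval u2 w2"
  obtain x1 x2 y1 y2 where pq: "p = (x1, x2)" "q = (y1, y2)"
    by fastforce
  have sub: "set x1 \<union> set y1 \<subseteq> set u1 \<union> set w1" "set x2 \<union> set y2 \<subseteq> set u2 \<union> set w2"
    using p q word_interval_subset unfolding pq by blast+
  show "rel_prod word_le word_le p q \<longleftrightarrow> word_le (?join p) (?join q)"
    unfolding pq using word_le_append_Cons_within[OF sub] by simp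
  show "p = q" if "?join p = ?join q"
    using that sub c_notin append_Cons_eq_iff[of c x1 x2 y1 y2] unfolding pq by auto
next
  show "(\<lambda>(v1, v2). v1 @ c # v2) ` (word_interval u1 w1 \<times> word_interval u2 w2) =
      word_interval (u1 @ c # u2) (w1 @ c # w2)"
  proof (intro subset_antisym subsetI)
    fix v
    assume "v \<in> word_interval (u1 @ c # u2) (w1 @ c # w2)"
    then obtain v1 v2 where "v = v1 @ c # v2" "v1 \<in> word_interval u1 w1" "v2 \<in> word_interval u2 w2"
      by (rule word_interval_append_Cons_cases)
    then show "v \<in> (\<lambda>(v1, v2). v1 @ c # v2) ` (word_interval u1 w1 \<times> word_interval u2 w2)"
      by (auto intro!: image_eqI[where x = "(v1, v2)"])
  qed (auto intro: append_Cons_mem_word_interval)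
qed

lemma order_iso_betw_word_interval_append_Cons:
  assumes "order_iso_betw word_le (shuffle_le M N) f1 (word_interval u1 w1) (shuffles M N)"
    and "order_iso_betw word_le (prod_le ds) f2 (word_interval u2 w2) (prod_shuffles ds)"
  shows "\<exists>f. order_iso_betw word_le (prod_le ((M, N) # ds)) f
      (word_interval (u1 @ c # u2) (w1 @ c # w2)) (prod_shuffles ((M, N) # ds))"
  using order_iso_betw_comp[OF order_iso_betw_comp[OF
      order_iso_betw_inv_into[OF order_iso_betw_append_Cons] order_iso_betw_map_prod[OF assms]]
      order_iso_betw_Cons]
  by blast

end

lemma word_le_split_first_common:
  assumes u: "ordered_word u" and w: "ordered_word w" and le: "word_le u w"
    and common: "\<exists>l\<in>set u. l \<in> set w"
  obtains u1 c u2 w1 w2 where "u = u1 @ c # u2" and "w = w1 @ c # w2"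
    and "(set u1 \<union> set w1) \<inter> (set u2 \<union> set w2) = {}"
    and "\<forall>l\<in>set u1. is_A l" and "\<forall>l\<in>set w1. \<not> is_A l"
proof -
  obtain u1 c u2 where u_eq: "u = u1 @ c # u2" and "c \<in> set w" and u1: "\<forall>l\<in>set u1. l \<notin> set w"
    using split_list_first_prop[OF common] by blast
  then obtain w1 w2 where w_eq: "w = w1 @ c # w2"
    by (meson split_list)
  have "distinct u" "distinct w"
    using u w unfolding ordered_word_def by auto
  then have "set u1 \<inter> set w = set w1 \<inter> set u"
    using word_le_append_Cons_common(1) le unfolding u_eq w_eq by blast
  with u1 have w1: "\<forall>l\<in>set w1. l \<notin> set u"
    by blast
  have "set u1 \<subseteq> set u" "set w1 \<subseteq> set w"
    unfolding u_eq w_eq by auto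
  then have lower: "\<forall>l\<in>set u1. is_A l" and upper: "\<forall>l\<in>set w1. \<not> is_A l"
    using le u1 w1 unfolding word_le_def by blast+
  have "set u1 \<inter> set u2 = {}" "set w1 \<inter> set w2 = {}"
    using \<open>distinct u\<close> \<open>distinct w\<close> unfolding u_eq w_eq by auto
  moreover have "set u1 \<inter> set w2 = {}" "set w1 \<inter> set u2 = {}"
    using u1 w1 unfolding u_eq w_eq by auto
  ultimately have "(set u1 \<union> set w1) \<inter> (set u2 \<union> set w2) = {}"
    by blast
  from u_eq w_eq this lower upper show ?thesis
    by (rule that)
qed

lemma word_interval_iso_prod_shuffles:
  "ordered_word u \<Longrightarrow> ordered_word w \<Longrightarrow> word_le u w \<Longrightarrow>
     \<exists>ds f. ds \<noteq> [] \<and> order_iso_betw word_le (prod_le ds) f (word_interval u w) (prod_shuffles ds)"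
proof (induction "length u" arbitrary: u w rule: less_induct)
  case less
  show ?case
  proof (cases "\<exists>l\<in>set u. l \<in> set w")
    case False
    then have "\<forall>l\<in>set u. is_A l" and "\<forall>l\<in>set w. \<not> is_A l"
      using \<open>word_le u w\<close> unfolding word_le_def by blast+
    then obtain f where "order_iso_betw word_le (shuffle_le (length u) (length w)) f
        (word_interval u w) (shuffles (length u) (length w))"
      using order_iso_betw_word_interval_shuffles less.prems by blast
    from order_iso_betw_comp[OF this order_iso_betw_singleton]
    show ?thesis
      by blast
  next
    case True
    with less.prems obtain u1 c u2 w1 w2 where u: "u = u1 @ c # u2" and w: "w = w1 @ c # w2"
      and separated: "(set u1 \<union> set w1) \<inter> (set u2 \<union> set w2) = {}"
      and "\<forall>l\<in>set u1. is_A l" and "\<forall>l\<in>set w1. \<not> is_A l"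
      by (rule word_le_split_first_common)
    moreover have "ordered_word u1 \<and> ordered_word u2" "ordered_word w1 \<and> ordered_word w2"
      using less.prems(1,2) unfolding u w by (auto dest: ordered_word_append_ConsD)
    ultimately obtain f1 where f1: "order_iso_betw word_le (shuffle_le (length u1) (length w1)) f1
        (word_interval u1 w1) (shuffles (length u1) (length w1))"
      using order_iso_betw_word_interval_shuffles by blast
    note within = word_le_append_Cons_within[OF less.prems(1,2)[unfolded u w] separated]
    have "word_le u2 w2"
      using within[of u1 w1 u2 w2] less.prems(3) unfolding u w by auto
    then obtain ds f2
      where f2: "order_iso_betw word_le (prod_le ds) f2 (word_interval u2 w2) (prod_shuffles ds)"
      using less.hyps[of u2 w2] \<open>ordered_word u1 \<and> ordered_word u2\<close>
        \<open>ordered_word w1 \<and> ordered_word w2\<close>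
      unfolding u by auto
    show ?thesis
      using order_iso_betw_word_interval_append_Cons[OF less.prems(1,2)[unfolded u w] separated
          f1 f2]
      unfolding u w by blast
  qed
qed

theorem lemma2p2:
  fixes M N :: nat and u w :: "letter list"
  assumes "u \<in> shuffles M N" and "w \<in> shuffles M N" and "shuffle_le M N u w"
  shows "\<exists>ds :: (nat \<times> nat) list. length ds \<ge> 1 \<and>
           (\<exists>f. bij_betw f (shuffle_interval M N u w) (prod_shuffles ds) \<and>
                (\<forall>v \<in> shuffle_interval M N u w. \<forall>v' \<in> shuffle_interval M N u w.
                    shuffle_le M N v v' \<longleftrightarrow> prod_le ds (f v) (f v')))"
proof -
  have "ordered_word u" "ordered_word w" "word_le u w"
    using assms(3) by (simp_all add: shuffle_le_iff_word_le shuffle_word_iff)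
  then obtain ds f where "ds \<noteq> []"
    and f: "order_iso_betw word_le (prod_le ds) f (word_interval u w) (prod_shuffles ds)"
    using word_interval_iso_prod_shuffles by blast
  have interval: "shuffle_interval M N u w = word_interval u w"
    using assms(3) by (rule shuffle_interval_eq_word_interval)
  have "order_iso_betw (shuffle_le M N) (prod_le ds) f
      (shuffle_interval M N u w) (prod_shuffles ds)"
    using f unfolding interval[symmetric]
    by (rule order_iso_betw_cong)
      (auto simp: shuffle_interval_def shuffle_le_iff_word_le shuffles_def)
  with \<open>ds \<noteq> []\<close> show ?thesis
    unfolding order_iso_betw_def by (auto simp: Suc_le_eq)
qed

end
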